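(* Every integer $n\ge 2$ is a cutoff.
   Context: For a real number $\alpha\ge 1$, define the integer sequence $(P^\alpha_i)_{i\ge 0}$ by $P^\alpha_0=0$, $P^\alpha_1=1$, and for $k\ge 1$, $P^\alpha_{k+1}=P^\alpha_k+P^\alpha_j$, where $j\ge1$ is the unique index with $\alpha P^\alpha_{j-1}<P^\alpha_k\le \alpha P^\alpha_j$. A cutoff is a real number $\alpha\ge 1$ such that for every real $\beta$ with $1\le\beta<\alpha$, the sequences $(P^\alpha_i)$ and $(P^\beta_i)$ are not identical. *)

theory Defs
  imports Complex_Main
begin

text \<open>For k >= 1, P_(k+1) = P_k + P_j where j >= 1 is the index with
  alpha * P_(j-1) < P_k <= alpha * P_j. Such a j necessarily satisfies j <= k
  (the sequence is increasing and alpha >= 1), so it is selected among 1..k.\<close>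

fun P_list :: "real \<Rightarrow> nat \<Rightarrow> nat list" where
  "P_list \<alpha> 0 = [0]"
| "P_list \<alpha> (Suc 0) = [0, 1]"
| "P_list \<alpha> (Suc (Suc k)) =
    (let xs = P_list \<alpha> (Suc k);
         m = Suc k;
         j = (LEAST j. 1 \<le> j \<and> j \<le> m \<and>
                 \<alpha> * real (xs ! (j - 1)) < real (xs ! m) \<and>
                 real (xs ! m) \<le> \<alpha> * real (xs ! j))
     in xs @ [xs ! m + xs ! j])"

definition P :: "real \<Rightarrow> nat \<Rightarrow> nat" where
  "P \<alpha> i = P_list \<alpha> i ! i"

definition cutoff :: "real \<Rightarrow> bool" where
  "cutoff \<alpha> \<longleftrightarrow> 1 \<le> \<alpha> \<and> (\<forall>\<beta>::real. 1 \<le> \<beta> \<and> \<beta> < \<alpha> \<longrightarrow> P \<alpha> \<noteq> P \<beta>)"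

end

theory Submission
  imports Defs
begin

text \<open>While the index stays at most \<open>\<alpha> + 1\<close>, every step adds \<open>P\<^sub>1 = 1\<close>, so the sequence
  begins \<open>0, 1, 2, \<dots>\<close>. At the first index \<open>m > \<alpha>\<close>, i.e. \<open>m = \<lfloor>\<alpha>\<rfloor> + 1\<close>, the step adds
  \<open>P\<^sub>2 = 2\<close> instead, so \<open>P\<^sub>m\<^sub>+\<^sub>1 = m + 2\<close>. For \<open>1 \<le> \<beta> < n\<close> this index satisfies
  \<open>m \<le> n\<close>, where \<open>P\<^sup>n\<close> still has \<open>P\<^sub>m\<^sub>+\<^sub>1 = m + 1\<close>; hence the two sequences differ.\<close>

text \<open>The intervals \<open>(\<alpha> (j - 1), \<alpha> j]\<close> are disjoint, so the \<open>LEAST\<close> in the recursion is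
  the unique index whose interval contains the current term.\<close>

lemma P_list_Suc_Suc_of_upt:
  assumes prefix: "P_list \<alpha> (Suc m) = [0..<Suc (Suc m)]"
    and j: "1 \<le> j" "j \<le> Suc m" "\<alpha> * real (j - 1) < real (Suc m)" "real (Suc m) \<le> \<alpha> * real j"
  shows "P_list \<alpha> (Suc (Suc m)) = [0..<Suc (Suc m)] @ [Suc m + j]"
proof -
  have "0 < \<alpha> * real j"
    using j(4) of_nat_0_less_iff[of "Suc m"] by linarith
  then have "\<alpha> > 0"
    by (simp add: zero_less_mult_iff)
  have least: "(LEAST i. 1 \<le> i \<and> i \<le> Suc m \<and>
          \<alpha> * real ([0..<Suc (Suc m)] ! (i - 1)) < real ([0..<Suc (Suc m)] ! Suc m) \<and>
          real ([0..<Suc (Suc m)] ! Suc m) \<le> \<alpha> * real ([0..<Suc (Suc m)] ! i)) = j"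
  proof (rule Least_equality)
    fix i
    assume i: "1 \<le> i \<and> i \<le> Suc m \<and>
          \<alpha> * real ([0..<Suc (Suc m)] ! (i - 1)) < real ([0..<Suc (Suc m)] ! Suc m) \<and>
          real ([0..<Suc (Suc m)] ! Suc m) \<le> \<alpha> * real ([0..<Suc (Suc m)] ! i)"
    show "j \<le> i"
    proof (rule ccontr)
      assume "\<not> j \<le> i"
      then have "real i \<le> real (j - 1)" by simp
      then have "\<alpha> * real i \<le> \<alpha> * real (j - 1)" using \<open>\<alpha> > 0\<close> by simp
      moreover have "real (Suc m) \<le> \<alpha> * real i"
        using i by (clarsimp simp del: upt_Suc)
      ultimately show False using j(1,3) by (simp add: of_nat_diff)
    qed
  qed (use j in \<open>simp del: upt_Suc\<close>)
  show ?thesis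
    using prefix least j(2) by (simp add: Let_def del: upt_Suc)
qed

lemma P_list_eq_upt:
  assumes "real k \<le> \<alpha> + 1"
  shows "P_list \<alpha> k = [0..<Suc k]"
  using assms
proof (induction \<alpha> k rule: P_list.induct)
  case (3 \<alpha> m)
  then have "P_list \<alpha> (Suc m) = [0..<Suc (Suc m)]" and "real (Suc m) \<le> \<alpha>"
    by simp_all
  from P_list_Suc_Suc_of_upt[OF this(1), of 1] this(2) show ?case
    by simp
qed simp_all

corollary P_eq_self:
  assumes "real i \<le> \<alpha> + 1"
  shows "P \<alpha> i = i"
  using P_list_eq_upt[OF assms] by (simp add: P_def del: upt_Suc)

lemma P_first_jump:
  assumes "2 \<le> m" "\<alpha> < real m" "real m \<le> \<alpha> + 1"
  shows "P \<alpha> (Suc m) = Suc (Suc m)"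
proof -
  obtain k where m: "m = Suc k" and "1 \<le> k"
    using assms(1) by (cases m) auto
  have "P_list \<alpha> (Suc k) = [0..<Suc (Suc k)]"
    using P_list_eq_upt assms(3) m by simp
  from P_list_Suc_Suc_of_upt[OF this, of 2]
  have "P_list \<alpha> (Suc m) = [0..<Suc m] @ [Suc m + 1]"
    using assms m \<open>1 \<le> k\<close> by simp
  then show ?thesis
    by (simp add: P_def nth_append del: upt_Suc)
qed

theorem mainTheorem10:
  fixes n :: int
  assumes "n \<ge> 2"
  shows "cutoff (real_of_int n)"
  unfolding cutoff_def
proof (intro conjI allI impI)
  show "1 \<le> real_of_int n"
    using assms by simp
  fix \<beta> :: real
  assume \<beta>: "1 \<le> \<beta> \<and> \<beta> < real_of_int n"
  define m where "m = nat \<lfloor>\<beta>\<rfloor> + 1"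
  have "real m = of_int \<lfloor>\<beta>\<rfloor> + 1" "\<lfloor>\<beta>\<rfloor> < n"
    using \<beta> unfolding m_def by (simp_all add: floor_less_iff)
  then have m: "2 \<le> m" "\<beta> < real m" "real m \<le> \<beta> + 1" "real (Suc m) \<le> real_of_int n + 1"
    using \<beta> by linarith+
  have "P \<beta> (Suc m) \<noteq> P (real_of_int n) (Suc m)"
    using P_first_jump[OF m(1-3)] P_eq_self[OF m(4)] by simp
  then show "P (real_of_int n) \<noteq> P \<beta>"
    by metis
qed

end
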